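(* For a greedy policy: (i) for all $t\ge1$ and $n\ge(2+\gamma/\mu)^2$, $$\Pr\left(\left|\frac{R_{\mathbf G}(n)-n/2}{\sqrt n}\right|>t\right)\le 2\exp\left\{-\left(\frac{\mu}{2\gamma}\right)^2t\right\};$$ (ii) with $T_n:=\min\bigl(n,\inf\{k\ge1: S_{\mathbf G}(k+1)=\lceil n/2\rceil+1\ \text{or}\ R_{\mathbf G}(k+1)=\lceil n/2\rceil+1\}\bigr)$, the sequence $\left\{\left(\frac{n-T_n}{\sqrt n}\right)^2\right\}_{n\ge1}$ is uniformly integrable.
   Context: Let $(r_i)_{i\ge1}$, $(s_i)_{i\ge1}$ be probability vectors on the positive integers with $\mu:=\sum_i r_is_i>0$, and $\gamma:=\sup_i r_i\vee\sup_i s_i$. Let $\{L_{\mathbf R}(n)\}_{n\ge1}$, $\{L_{\mathbf S}(n)\}_{n\ge1}$ be independent i.i.d. sequences with $\Pr(L_{\mathbf R}(1)=i)=r_i$, $\Pr(L_{\mathbf S}(1)=i)=s_i$. Put $X_{\mathbf R}(n)=s_{L_{\mathbf R}(n)}$, $X_{\mathbf S}(n)=r_{L_{\mathbf S}(n)}$, and $\Gamma_{\mathbf R}[m]=\sum_{j=1}^mX_{\mathbf R}(j)$, $\Gamma_{\mathbf S}[m]=\sum_{j=1}^mX_{\mathbf S}(j)$. A reading policy is a $\{0,1\}$-valued process $C(n)$ ($C(n)=1$ iff the $n$-th record is read from $\mathbf R$), $R(n)=\sum_{j\le n}C(j)$, $S(n)=n-R(n)$, with $C(n)$ being $\mathcal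 F_{n-1}$-measurable where $\mathcal F_n=\mathcal F_0\vee\sigma(L_{\mathbf R}(1),\dots,L_{\mathbf R}(R(n));L_{\mathbf S}(1),\dots,L_{\mathbf S}(S(n)))$ and $\mathcal F_0$ (randomization) is independent of the labels. A greedy policy satisfies, for $n\ge1$, $C(n+1)=1$ if $\Gamma_{\mathbf S}[S(n)]>\Gamma_{\mathbf R}[R(n)]$ and $C(n+1)=0$ if $\Gamma_{\mathbf S}[S(n)]<\Gamma_{\mathbf R}[R(n)]$ (ties arbitrary); $R_{\mathbf G},S_{\mathbf G}$ denote its $R,S$. *)

theory Defs
  imports "HOL-Probability.Probability"
begin

text \<open>Index of the independent family: the randomization sigma-algebra and the
 labels of the two files.\<close>
datatype src = Rand | LabR nat | LabS nat

text \<open>Number of records read from R among the first n reads (C j = True iff the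
 j-th record is read from R).\<close>
definition Rcnt :: "(nat \<Rightarrow> 'a \<Rightarrow> bool) \<Rightarrow> nat \<Rightarrow> 'a \<Rightarrow> nat" where
  "Rcnt C n \<omega> = card {j\<in>{1..n}. C j \<omega>}"

definition Scnt :: "(nat \<Rightarrow> 'a \<Rightarrow> bool) \<Rightarrow> nat \<Rightarrow> 'a \<Rightarrow> nat" where
  "Scnt C n \<omega> = n - Rcnt C n \<omega>"

definition Gam :: "(nat \<Rightarrow> 'a \<Rightarrow> real) \<Rightarrow> nat \<Rightarrow> 'a \<Rightarrow> real" where
  "Gam X m \<omega> = (\<Sum>j=1..m. X j \<omega>)"

text \<open>Observed history after n reads: how many records were read from R, and the
 labels read so far from R and from S (unread positions are masked by 0).\<close>
definition hist :: "(nat \<Rightarrow> 'a \<Rightarrow> bool) \<Rightarrow> (nat \<Rightarrow> 'a \<Rightarrow> nat) \<Rightarrow> (nat \<Rightarrow> 'a \<Rightarrow> nat)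
    \<Rightarrow> nat \<Rightarrow> 'a \<Rightarrow> nat \<times> (nat \<Rightarrow> nat) \<times> (nat \<Rightarrow> nat)" where
  "hist C LR LS n \<omega> = (Rcnt C n \<omega>,
      (\<lambda>j. if 1 \<le> j \<and> j \<le> Rcnt C n \<omega> then LR j \<omega> else 0),
      (\<lambda>j. if 1 \<le> j \<and> j \<le> Scnt C n \<omega> then LS j \<omega> else 0))"

definition filt :: "'a measure \<Rightarrow> 'a measure \<Rightarrow> (nat \<Rightarrow> 'a \<Rightarrow> bool) \<Rightarrow> (nat \<Rightarrow> 'a \<Rightarrow> nat)
    \<Rightarrow> (nat \<Rightarrow> 'a \<Rightarrow> nat) \<Rightarrow> nat \<Rightarrow> 'a set set" where
  "filt M F0 C LR LS n = sigma_sets (space M)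
      (sets F0 \<union> {hist C LR LS n -` A \<inter> space M | A. True})"

definition reading_policy where
  "reading_policy M F0 C LR LS \<longleftrightarrow>
     (\<forall>n\<ge>1. {\<omega>\<in>space M. C n \<omega>} \<in> filt M F0 C LR LS (n - 1))"

definition greedy :: "'a measure \<Rightarrow> (nat \<Rightarrow> real) \<Rightarrow> (nat \<Rightarrow> real) \<Rightarrow> (nat \<Rightarrow> 'a \<Rightarrow> bool) \<Rightarrow> (nat \<Rightarrow> 'a \<Rightarrow> nat) \<Rightarrow> (nat \<Rightarrow> 'a \<Rightarrow> nat) \<Rightarrow> bool" where
  "greedy M r s C LR LS \<longleftrightarrow> (\<forall>n\<ge>1. \<forall>\<omega>\<in>space M.
     (Gam (\<lambda>j w. r (LS j w)) (Scnt C n \<omega>) \<omega> > Gam (\<lambda>j w. s (LR j w)) (Rcnt C n \<omega>) \<omega>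
        \<longrightarrow> C (Suc n) \<omega>) \<and>
     (Gam (\<lambda>j w. r (LS j w)) (Scnt C n \<omega>) \<omega> < Gam (\<lambda>j w. s (LR j w)) (Rcnt C n \<omega>) \<omega>
        \<longrightarrow> \<not> C (Suc n) \<omega>))"

definition Tn :: "(nat \<Rightarrow> 'a \<Rightarrow> bool) \<Rightarrow> nat \<Rightarrow> 'a \<Rightarrow> nat" where
  "Tn C n \<omega> = (let P = (\<lambda>k. 1 \<le> k \<and> (Scnt C (k+1) \<omega> = nat \<lceil>real n / 2\<rceil> + 1
                                    \<or> Rcnt C (k+1) \<omega> = nat \<lceil>real n / 2\<rceil> + 1))
                in if \<exists>k. P k then min n (LEAST k. P k) else n)"

definition unif_integrable :: "'a measure \<Rightarrow> nat set \<Rightarrow> (nat \<Rightarrow> 'a \<Rightarrow> real) \<Rightarrow> bool" where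
  "unif_integrable M I Y \<longleftrightarrow> (\<forall>n\<in>I. Y n \<in> borel_measurable M) \<and>
     ((\<lambda>K::real. SUP n\<in>I. \<integral>\<^sup>+ \<omega>. ennreal \<bar>Y n \<omega>\<bar> * indicator {\<omega>. \<bar>Y n \<omega>\<bar> > K} \<omega> \<partial>M)
        \<longlongrightarrow> 0) at_top"

end

(* The greedy rule reads from R only if Gamma_S[S] >= Gamma_R[R], so at the moment the number of records
   read from R goes from c to c + 1 we have Gamma_R[c] <= Gamma_S[S]; symmetrically for S. Hence if after
   a + h + 1 reads one file has been read more than h times, then Gamma_R[h] <= Gamma_S[a] or
   Gamma_S[h] <= Gamma_R[a]. Both are events about fixed sums of independent [0, gamma]-valued variables
   with common mean mu, so by Hoeffding's inequality each has probability at most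
   exp (-2 ((h - a) mu)^2 / ((a + h) gamma^2)). Taking h = floor (n/2 + t sqrt n) gives (i). Taking
   h = ceil (n/2) and a = n - d - h gives P(T_n <= n - d) <= 2 exp (-2 d^2 mu^2 / (n gamma^2)), a uniform
   exponential tail for ((n - T_n) / sqrt n)^2, which yields the uniform integrability (ii). *)

theory Submission
  imports Defs "HOL-Real_Asymp.Real_Asymp"
begin

lemma (in prob_space) AE_neq_0_if_masses_sum_1:
  fixes X :: "'a \<Rightarrow> nat" and f :: "nat \<Rightarrow> real"
  assumes [measurable]: "X \<in> measurable M (count_space UNIV)"
    and sums: "(\<lambda>i. f (Suc i)) sums 1"
    and masses: "\<forall>i\<ge>1. prob {\<omega>\<in>space M. X \<omega> = i} = f i"
  shows "AE \<omega> in M. X \<omega> \<noteq> 0"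
proof -
  define A where "A i = {\<omega>\<in>space M. X \<omega> = Suc i}" for i
  have "(\<lambda>i. prob (A i)) sums prob (\<Union>i. A i)"
    by (intro measure_UNION) (auto simp: A_def disjoint_family_on_def)
  moreover have "(\<lambda>i. prob (A i)) = (\<lambda>i. f (Suc i))"
    using masses by (auto simp: A_def)
  moreover have "(\<Union>i. A i) = {\<omega>\<in>space M. X \<omega> \<noteq> 0}"
    by (auto simp: A_def not0_implies_Suc)
  ultimately have "prob {\<omega>\<in>space M. X \<omega> \<noteq> 0} = 1"
    using sums sums_unique2 by metis
  then show ?thesis by (subst (asm) prob_Collect_eq_1) auto
qed

lemma sums_level_set_indicators:
  fixes X :: "'a \<Rightarrow> nat" and c :: "nat \<Rightarrow> real"
  assumes "\<omega> \<in> S" "X \<omega> \<noteq> 0"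
  shows "(\<lambda>i. c (Suc i) * indicator {\<omega>\<in>S. X \<omega> = Suc i} \<omega>) sums c (X \<omega>)"
proof -
  obtain k where k: "X \<omega> = Suc k" using \<open>X \<omega> \<noteq> 0\<close> not0_implies_Suc by blast
  have "(\<lambda>i. c (Suc i) * indicator {\<omega>\<in>S. X \<omega> = Suc i} \<omega>) = (\<lambda>i. if i = k then c (Suc k) else 0)"
    using assms k by (auto simp: indicator_def)
  then show ?thesis using sums_single[of k "\<lambda>_. c (Suc k)"] k by simp
qed

lemma (in prob_space) expectation_comp_eq_suminf:
  fixes X :: "'a \<Rightarrow> nat" and f g :: "nat \<Rightarrow> real"
  assumes X[measurable]: "X \<in> measurable M (count_space UNIV)"
    and sums: "(\<lambda>i. f (Suc i)) sums 1" and nonneg: "\<forall>i\<ge>1. f i \<ge> 0"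
    and masses: "\<forall>i\<ge>1. prob {\<omega>\<in>space M. X \<omega> = i} = f i"
    and bounded: "\<forall>i\<ge>1. \<bar>g i\<bar> \<le> B"
  shows "expectation (\<lambda>\<omega>. g (X \<omega>)) = (\<Sum>i. g (Suc i) * f (Suc i))"
proof -
  define h where "h i \<omega> = g (Suc i) * indicator {\<omega>\<in>space M. X \<omega> = Suc i} \<omega>" for i \<omega>
  have h_int: "integrable M (h i)" for i
    unfolding h_def
    by (intro integrable_mult_right integrable_real_indicator) (auto simp: emeasure_eq_measure)
  have h_expectation: "expectation (h i) = g (Suc i) * f (Suc i)" for i
    using masses by (simp add: h_def[abs_def])
  have norm_h: "norm (h i \<omega>) = \<bar>g (Suc i)\<bar> * indicator {\<omega>\<in>space M. X \<omega> = Suc i} \<omega>" for i \<omega>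
    by (simp add: h_def abs_mult)
  have AE_sums: "AE \<omega> in M. (\<lambda>i. h i \<omega>) sums g (X \<omega>) \<and> (\<lambda>i. norm (h i \<omega>)) sums \<bar>g (X \<omega>)\<bar>"
    using AE_space AE_neq_0_if_masses_sum_1[OF X sums masses]
    unfolding norm_h unfolding h_def
    by eventually_elim
       (simp add: sums_level_set_indicators[where c = g] sums_level_set_indicators[where c = "\<lambda>i. \<bar>g i\<bar>"])
  have "summable (\<lambda>i. \<bar>g (Suc i)\<bar> * f (Suc i))"
  proof (rule summable_comparison_test)
    show "\<exists>N. \<forall>n\<ge>N. norm (\<bar>g (Suc n)\<bar> * f (Suc n)) \<le> B * f (Suc n)"
      using bounded nonneg by (intro exI[of _ 0]) (auto simp: abs_mult intro!: mult_right_mono)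
    show "summable (\<lambda>n. B * f (Suc n))"
      using sums by (intro summable_mult) (auto simp: sums_iff)
  qed
  then have norm_summable: "summable (\<lambda>i. \<integral>\<omega>. norm (h i \<omega>) \<partial>M)"
    unfolding norm_h using masses by simp
  have AE_summable: "AE \<omega> in M. summable (\<lambda>i. norm (h i \<omega>))"
    using AE_sums by eventually_elim (simp add: sums_iff)
  have "expectation (\<lambda>\<omega>. g (X \<omega>)) = expectation (\<lambda>\<omega>. \<Sum>i. h i \<omega>)"
    using AE_sums integrable_suminf[OF h_int AE_summable norm_summable]
    by (intro integral_cong_AE) (auto simp: sums_iff elim: eventually_mono)
  also have "\<dots> = (\<Sum>i. expectation (h i))"
    by (intro integral_suminf h_int AE_summable norm_summable)
  finally show ?thesis by (simp add: h_expectation)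
qed

lemma term_le_1_if_nonneg_sums_1:
  fixes f :: "nat \<Rightarrow> real"
  assumes "(\<lambda>i. f (Suc i)) sums 1" "\<forall>i\<ge>1. f i \<ge> 0" "i \<ge> 1"
  shows "f i \<le> 1"
proof -
  obtain k where k: "i = Suc k" using \<open>i \<ge> 1\<close> not0_implies_Suc by fastforce
  have "(\<Sum>i\<in>{k}. f (Suc i)) \<le> (\<Sum>i. f (Suc i))"
    using assms by (intro sum_le_suminf) (auto simp: sums_iff)
  then show ?thesis using k assms(1) by (simp add: sums_iff)
qed

lemma (in prob_space) Hoeffding_ineq_sum_le_sum:
  fixes Z :: "'i \<Rightarrow> 'a \<Rightarrow> real" and A B :: "'i set"
  assumes fin: "finite A" "finite B" and disj: "A \<inter> B = {}"
    and indep: "indep_vars (\<lambda>_. borel) Z (A \<union> B)"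
    and bounded: "\<And>i. i \<in> A \<union> B \<Longrightarrow> AE \<omega> in M. Z i \<omega> \<in> {0..g}"
    and mean: "\<And>i. i \<in> A \<union> B \<Longrightarrow> expectation (Z i) = m"
    and "0 \<le> m" "card A \<le> card B"
  shows "prob {\<omega>\<in>space M. (\<Sum>i\<in>B. Z i \<omega>) \<le> (\<Sum>i\<in>A. Z i \<omega>)}
           \<le> exp (-2 * ((real (card B) - real (card A)) * m)\<^sup>2 / ((real (card A) + real (card B)) * g\<^sup>2))"
proof -
  define W where "W i \<omega> = (if i \<in> A then 1 else -1) * Z i \<omega>" for i \<omega>
  define lo where "lo i = (if i \<in> A then 0 else - g)" for i
  define hi where "hi i = (if i \<in> A then g else 0)" for i
  interpret H: Hoeffding_ineq M "A \<union> B" W lo hi "\<Sum>i\<in>A \<union> B. expectation (W i)"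
  proof unfold_locales
    show "finite (A \<union> B)" using fin by simp
    show "indep_vars (\<lambda>_. borel) W (A \<union> B)"
      unfolding W_def[abs_def]
      by (rule indep_vars_compose2[OF indep, where Y="\<lambda>i x. (if i \<in> A then 1 else -1) * x"]) auto
    show "AE \<omega> in M. W i \<omega> \<in> {lo i..hi i}" if "i \<in> A \<union> B" for i
      using bounded[OF that] by eventually_elim (auto simp: W_def lo_def hi_def)
  qed
  have sum_split: "(\<Sum>i\<in>A \<union> B. F i) = (\<Sum>i\<in>A. F i) + (\<Sum>i\<in>B. F i)" for F :: "'i \<Rightarrow> real"
    using fin disj by (rule sum.union_disjoint)
  have sum_W: "(\<Sum>i\<in>A \<union> B. W i \<omega>) = (\<Sum>i\<in>A. Z i \<omega>) - (\<Sum>i\<in>B. Z i \<omega>)" for \<omega>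
    using disj by (auto simp: sum_split W_def sum_negf[symmetric] intro!: sum.cong)
  have "(\<Sum>i\<in>A. expectation (W i)) = (\<Sum>i\<in>A. m)" "(\<Sum>i\<in>B. expectation (W i)) = (\<Sum>i\<in>B. - m)"
    using disj by (intro sum.cong refl; force simp: W_def[abs_def] mean)+
  then have sum_EW: "(\<Sum>i\<in>A \<union> B. expectation (W i)) = real (card A) * m - real (card B) * m"
    by (simp add: sum_split)
  have "(\<Sum>i\<in>A. (hi i - lo i)\<^sup>2) = (\<Sum>i\<in>A. g\<^sup>2)" "(\<Sum>i\<in>B. (hi i - lo i)\<^sup>2) = (\<Sum>i\<in>B. g\<^sup>2)"
    using disj by (intro sum.cong refl; force simp: hi_def lo_def)+
  then have sum_width: "(\<Sum>i\<in>A \<union> B. (hi i - lo i)\<^sup>2) = (real (card A) + real (card B)) * g\<^sup>2"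
    by (simp add: sum_split algebra_simps)
  have "{\<omega>\<in>space M. (\<Sum>i\<in>B. Z i \<omega>) \<le> (\<Sum>i\<in>A. Z i \<omega>)}
      = {\<omega>\<in>space M. (\<Sum>i\<in>A \<union> B. W i \<omega>) \<ge> (\<Sum>i\<in>A \<union> B. expectation (W i))
                                             + (real (card B) - real (card A)) * m}"
    by (auto simp: sum_W sum_EW algebra_simps)
  also have "prob \<dots> \<le> exp (-2 * ((real (card B) - real (card A)) * m)\<^sup>2 / (\<Sum>i\<in>A \<union> B. (hi i - lo i)\<^sup>2))"
  proof (cases "(\<Sum>i\<in>A \<union> B. (hi i - lo i)\<^sup>2) = 0")
    case False
    then show ?thesis
      using \<open>0 \<le> m\<close> \<open>card A \<le> card B\<close> sum_nonneg[of "A \<union> B" "\<lambda>i. (hi i - lo i)\<^sup>2"]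
      by (intro H.Hoeffding_ineq_ge) auto
  qed simp
  finally show ?thesis by (simp only: sum_width)
qed

lemma ennreal_le_suminf_of_bool_less:
  fixes x :: real
  assumes "0 \<le> x"
  shows "ennreal x \<le> (\<Sum>j. of_bool (real j < x))"
proof -
  define N where "N = nat \<lceil>x\<rceil>"
  have "ennreal x \<le> ennreal (real N)"
    unfolding N_def by (intro ennreal_leI) linarith
  also have "\<dots> = (\<Sum>j<N. of_bool (real j < x))"
  proof -
    have "real j < x" if "j < N" for j
    proof -
      from that have "int j < \<lceil>x\<rceil>" unfolding N_def by (simp add: zless_nat_eq_int_zless)
      then show ?thesis by (simp add: less_ceiling_iff)
    qed
    then show ?thesis by (simp add: ennreal_of_nat_eq_real_of_nat)
  qed
  also have "\<dots> \<le> (\<Sum>j. of_bool (real j < x))"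
    by (intro sum_le_suminf) auto
  finally show ?thesis .
qed

lemma (in prob_space) nn_integral_tail_le_if_exponential_tail:
  fixes X :: "'a \<Rightarrow> real"
  assumes [measurable]: "X \<in> borel_measurable M"
    and nonneg: "\<And>\<omega>. \<omega> \<in> space M \<Longrightarrow> 0 \<le> X \<omega>" and "0 < q"
    and tail: "\<And>y. 0 \<le> y \<Longrightarrow> prob {\<omega>\<in>space M. y < X \<omega>} \<le> c * exp (- q * y)"
    and "0 \<le> K"
  shows "(\<integral>\<^sup>+ \<omega>. ennreal \<bar>X \<omega>\<bar> * indicator {\<omega>. \<bar>X \<omega>\<bar> > K} \<omega> \<partial>M)
           \<le> ennreal (c * exp (- q * K / 2) / (1 - exp (- q / 2)))"
proof -
  have "0 \<le> c" using tail[of 0] by (auto intro: order_trans[OF measure_nonneg])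
  define A where "A j = {\<omega>\<in>space M. max (real j) K < X \<omega>}" for j :: nat
  have A_sets[measurable]: "A j \<in> sets M" for j
    unfolding A_def by measurable
  have layer_cake: "ennreal \<bar>X \<omega>\<bar> * indicator {\<omega>. \<bar>X \<omega>\<bar> > K} \<omega> \<le> (\<Sum>j. indicator (A j) \<omega>)"
    if \<omega>: "\<omega> \<in> space M" for \<omega>
  proof (cases "K < X \<omega>")
    case True
    then have "ennreal \<bar>X \<omega>\<bar> * indicator {\<omega>. \<bar>X \<omega>\<bar> > K} \<omega> = ennreal (X \<omega>)"
      using nonneg[OF \<omega>] by (simp add: indicator_def)
    also have "\<dots> \<le> (\<Sum>j. of_bool (real j < X \<omega>))"
      using nonneg[OF \<omega>] by (rule ennreal_le_suminf_of_bool_less)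
    also have "\<dots> = (\<Sum>j. indicator (A j) \<omega>)"
      using True \<omega> by (simp add: A_def indicator_def)
    finally show ?thesis .
  qed (use nonneg[OF \<omega>] in \<open>simp add: indicator_def\<close>)
  have A_prob: "prob (A j) \<le> c * exp (- q * K / 2) * exp (- q / 2) ^ j" for j
  proof -
    have "prob (A j) \<le> c * exp (- q * max (real j) K)"
      unfolding A_def using \<open>0 \<le> K\<close> by (intro tail) auto
    also have "\<dots> \<le> c * exp (- q * K / 2 + real j * (- q / 2))"
      using \<open>0 < q\<close> \<open>0 \<le> c\<close> by (intro mult_left_mono) (auto simp: max_def field_simps)
    also have "\<dots> = c * exp (- q * K / 2) * exp (- q / 2) ^ j"
      by (simp only: exp_add exp_of_nat_mult mult.assoc)
    finally show ?thesis .
  qed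
  have "(\<integral>\<^sup>+ \<omega>. ennreal \<bar>X \<omega>\<bar> * indicator {\<omega>. \<bar>X \<omega>\<bar> > K} \<omega> \<partial>M)
        \<le> (\<integral>\<^sup>+ \<omega>. (\<Sum>j. indicator (A j) \<omega>) \<partial>M)"
    using layer_cake by (intro nn_integral_mono) auto
  also have "\<dots> = (\<Sum>j. emeasure M (A j))"
    by (simp add: nn_integral_suminf)
  also have "\<dots> \<le> (\<Sum>j. ennreal (c * exp (- q * K / 2) * exp (- q / 2) ^ j))"
    using A_prob by (intro suminf_le) (auto simp: emeasure_eq_measure ennreal_leI)
  also have "\<dots> = ennreal (c * exp (- q * K / 2) / (1 - exp (- q / 2)))"
  proof (rule suminf_ennreal_eq)
    have "(\<lambda>j. exp (- q / 2) ^ j) sums (1 / (1 - exp (- q / 2)))"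
      using \<open>0 < q\<close> by (intro geometric_sums) simp
    from sums_mult[OF this, of "c * exp (- q * K / 2)"]
    show "(\<lambda>j. c * exp (- q * K / 2) * exp (- q / 2) ^ j) sums (c * exp (- q * K / 2) / (1 - exp (- q / 2)))"
      by simp
    show "0 \<le> c * exp (- q * K / 2) * exp (- q / 2) ^ j" for j
      using \<open>0 \<le> c\<close> by simp
  qed
  finally show ?thesis .
qed

lemma (in prob_space) unif_integrable_if_exponential_tail:
  fixes Y :: "nat \<Rightarrow> 'a \<Rightarrow> real"
  assumes meas: "\<And>n. n \<in> I \<Longrightarrow> Y n \<in> borel_measurable M"
    and nonneg: "\<And>n \<omega>. n \<in> I \<Longrightarrow> \<omega> \<in> space M \<Longrightarrow> 0 \<le> Y n \<omega>" and "0 < q"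
    and tail: "\<And>n y. n \<in> I \<Longrightarrow> 0 \<le> y \<Longrightarrow> prob {\<omega>\<in>space M. y < Y n \<omega>} \<le> c * exp (- q * y)"
  shows "unif_integrable M I Y"
  unfolding unif_integrable_def
proof (intro conjI ballI meas)
  define G where "G K = ennreal (c * exp (- q * K / 2) / (1 - exp (- q / 2)))" for K
  have "((\<lambda>K. exp (- q * K / 2)) \<longlongrightarrow> 0) at_top"
    using \<open>0 < q\<close> by real_asymp
  then have "(G \<longlongrightarrow> ennreal (c * 0 / (1 - exp (- q / 2)))) at_top"
    unfolding G_def using \<open>0 < q\<close> by (intro tendsto_ennrealI tendsto_intros) auto
  then have G_0: "(G \<longlongrightarrow> 0) at_top" by simp
  show "((\<lambda>K. SUP n\<in>I. \<integral>\<^sup>+ \<omega>. ennreal \<bar>Y n \<omega>\<bar> * indicator {\<omega>. \<bar>Y n \<omega>\<bar> > K} \<omega> \<partial>M) \<longlongrightarrow> 0) at_top"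
  proof (rule tendsto_sandwich[OF _ _ tendsto_const G_0])
    show "\<forall>\<^sub>F K in at_top. (SUP n\<in>I. \<integral>\<^sup>+ \<omega>. ennreal \<bar>Y n \<omega>\<bar> * indicator {\<omega>. \<bar>Y n \<omega>\<bar> > K} \<omega> \<partial>M) \<le> G K"
      using eventually_ge_at_top[of 0]
    proof eventually_elim
      case (elim K)
      show ?case
        unfolding G_def
        by (intro SUP_least nn_integral_tail_le_if_exponential_tail meas nonneg tail \<open>0 < q\<close> elim)
    qed
  qed simp
qed

lemma Hoeffding_exponent_le:
  fixes t x c g :: real
  assumes "1 \<le> t" "0 < x"
  shows "exp (-2 * (t * sqrt x * c)\<^sup>2 / (x * g\<^sup>2)) \<le> exp (- ((c / (2 * g))\<^sup>2 * t))"
proof -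
  have sq: "(t * sqrt x * c)\<^sup>2 = x * (t\<^sup>2 * c\<^sup>2)"
    using \<open>0 < x\<close> by (simp add: power_mult_distrib)
  have "(c / (2 * g))\<^sup>2 * t = (t / 4) * (c / g)\<^sup>2"
    by (simp add: power_divide power_mult_distrib)
  also have "\<dots> \<le> (2 * t\<^sup>2) * (c / g)\<^sup>2"
    using \<open>1 \<le> t\<close> mult_mono[OF \<open>1 \<le> t\<close> \<open>1 \<le> t\<close>]
    by (intro mult_right_mono) (auto simp: power2_eq_square)
  also have "\<dots> = 2 * (t * sqrt x * c)\<^sup>2 / (x * g\<^sup>2)"
    using \<open>0 < x\<close> by (simp add: sq power_divide)
  finally show ?thesis by simp
qed

lemma Rcnt_0 [simp]: "Rcnt C 0 \<omega> = 0"
  by (simp add: Rcnt_def)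

lemma Rcnt_Suc: "Rcnt C (Suc k) \<omega> = Rcnt C k \<omega> + (if C (Suc k) \<omega> then 1 else 0)"
proof -
  have "{j\<in>{1..Suc k}. C j \<omega>} = {j\<in>{1..k}. C j \<omega>} \<union> (if C (Suc k) \<omega> then {Suc k} else {})"
    by (auto simp: le_Suc_eq)
  then show ?thesis by (auto simp: Rcnt_def card_insert_if)
qed

lemma Rcnt_le: "Rcnt C k \<omega> \<le> k"
proof -
  have "Rcnt C k \<omega> \<le> card {1..k}" unfolding Rcnt_def by (intro card_mono) auto
  then show ?thesis by simp
qed

lemma Rcnt_mono: "k \<le> m \<Longrightarrow> Rcnt C k \<omega> \<le> Rcnt C m \<omega>"
  unfolding Rcnt_def by (intro card_mono) auto

lemma Rcnt_add_Scnt: "Rcnt C m \<omega> + Scnt C m \<omega> = m"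
  using Rcnt_le[of C m \<omega>] by (simp add: Scnt_def)

lemma Rcnt_not: "Rcnt (\<lambda>j \<omega>. \<not> C j \<omega>) m \<omega> = Scnt C m \<omega>"
proof -
  have "{j\<in>{1..m}. \<not> C j \<omega>} = {1..m} - {j\<in>{1..m}. C j \<omega>}" by auto
  moreover have "card ({1..m} - {j\<in>{1..m}. C j \<omega>}) = m - card {j\<in>{1..m}. C j \<omega>}"
    by (subst card_Diff_subset) auto
  ultimately show ?thesis unfolding Rcnt_def Scnt_def by simp
qed

lemma Scnt_not: "Scnt (\<lambda>j \<omega>. \<not> C j \<omega>) m \<omega> = Rcnt C m \<omega>"
  using Rcnt_add_Scnt[of C m \<omega>] by (simp add: Scnt_def Rcnt_not)

lemma Scnt_mono: "k \<le> m \<Longrightarrow> Scnt C k \<omega> \<le> Scnt C m \<omega>"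
  using Rcnt_mono[of k m "\<lambda>j \<omega>. \<not> C j \<omega>" \<omega>] by (simp add: Rcnt_not)

lemma Gam_mono:
  assumes "\<forall>j\<ge>1. 0 \<le> X j \<omega>" "a \<le> b"
  shows "Gam X a \<omega> \<le> Gam X b \<omega>"
  unfolding Gam_def using assms by (intro sum_mono2) auto

lemma exists_up_crossing:
  fixes f :: "nat \<Rightarrow> nat"
  assumes "f 0 = 0" "\<And>k. f (Suc k) \<le> f k + 1" "c < f m"
  shows "\<exists>k<m. f k = c \<and> f (Suc k) = c + 1"
  using assms(3)
proof (induction m)
  case (Suc m)
  show ?case
  proof (cases "c < f m")
    case False
    then have "f m = c" "f (Suc m) = c + 1" using Suc.prems assms(2)[of m] by linarith+
    then show ?thesis by blast
  qed (use Suc.IH less_Suc_eq in blast)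
qed (use assms(1) in simp)

lemma greedy_swap:
  "greedy M s r (\<lambda>j \<omega>. \<not> C j \<omega>) LS LR \<longleftrightarrow> greedy M r s C LR LS"
  unfolding greedy_def Rcnt_not Scnt_not by auto

lemma greedy_GamR_le_GamS:
  assumes "greedy M r s C LR LS" "\<omega> \<in> space M" "\<forall>j\<ge>1. 0 \<le> r (LS j \<omega>)"
    and "1 \<le> c" "c < Rcnt C m \<omega>"
  shows "Gam (\<lambda>j w. s (LR j w)) c \<omega> \<le> Gam (\<lambda>j w. r (LS j w)) (Scnt C m \<omega>) \<omega>"
proof -
  have "\<exists>k<m. Rcnt C k \<omega> = c \<and> Rcnt C (Suc k) \<omega> = c + 1"
    by (rule exists_up_crossing) (use assms(5) in \<open>auto simp: Rcnt_Suc\<close>)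
  then obtain k where k: "k < m" "Rcnt C k \<omega> = c" "Rcnt C (Suc k) \<omega> = c + 1"
    by blast
  have "1 \<le> k" using k \<open>1 \<le> c\<close> by (cases k) auto
  have "C (Suc k) \<omega>" using k by (simp add: Rcnt_Suc split: if_splits)
  then have "\<not> Gam (\<lambda>j w. r (LS j w)) (Scnt C k \<omega>) \<omega> < Gam (\<lambda>j w. s (LR j w)) (Rcnt C k \<omega>) \<omega>"
    using assms(1,2) \<open>1 \<le> k\<close> unfolding greedy_def by blast
  then have "Gam (\<lambda>j w. s (LR j w)) c \<omega> \<le> Gam (\<lambda>j w. r (LS j w)) (Scnt C k \<omega>) \<omega>"
    using k by simp
  also have "\<dots> \<le> Gam (\<lambda>j w. r (LS j w)) (Scnt C m \<omega>) \<omega>"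
    using assms(3) k Scnt_mono[of k m C \<omega>] by (intro Gam_mono) auto
  finally show ?thesis .
qed

lemma greedy_unbalanced:
  assumes greedy: "greedy M r s C LR LS" and "\<omega> \<in> space M"
    and nonneg: "\<forall>j\<ge>1. 0 \<le> s (LR j \<omega>)" "\<forall>j\<ge>1. 0 \<le> r (LS j \<omega>)"
    and "1 \<le> h" "h < Rcnt C (a + h + 1) \<omega> \<or> h < Scnt C (a + h + 1) \<omega>"
  shows "Gam (\<lambda>j w. s (LR j w)) h \<omega> \<le> Gam (\<lambda>j w. r (LS j w)) a \<omega>
       \<or> Gam (\<lambda>j w. r (LS j w)) h \<omega> \<le> Gam (\<lambda>j w. s (LR j w)) a \<omega>"
  using assms(6)
proof
  assume R: "h < Rcnt C (a + h + 1) \<omega>"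
  have "Gam (\<lambda>j w. s (LR j w)) h \<omega> \<le> Gam (\<lambda>j w. r (LS j w)) (Scnt C (a + h + 1) \<omega>) \<omega>"
    using greedy_GamR_le_GamS[OF greedy \<open>\<omega> \<in> space M\<close> nonneg(2) \<open>1 \<le> h\<close> R] .
  also have "\<dots> \<le> Gam (\<lambda>j w. r (LS j w)) a \<omega>"
    using nonneg(2) R Rcnt_add_Scnt[of C "a + h + 1" \<omega>] by (intro Gam_mono) auto
  finally show ?thesis ..
next
  assume S: "h < Scnt C (a + h + 1) \<omega>"
  have "Gam (\<lambda>j w. r (LS j w)) h \<omega> \<le> Gam (\<lambda>j w. s (LR j w)) (Rcnt C (a + h + 1) \<omega>) \<omega>"
    using greedy_GamR_le_GamS[of M s r "\<lambda>j \<omega>. \<not> C j \<omega>" LS LR, unfolded greedy_swap Rcnt_not Scnt_not,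
        OF greedy \<open>\<omega> \<in> space M\<close> nonneg(1) \<open>1 \<le> h\<close> S] .
  also have "\<dots> \<le> Gam (\<lambda>j w. s (LR j w)) a \<omega>"
    using nonneg(1) S Rcnt_add_Scnt[of C "a + h + 1" \<omega>] by (intro Gam_mono) auto
  finally show ?thesis ..
qed

lemma map_upt_eq_iff: "map f [0..<n] = xs \<longleftrightarrow> length xs = n \<and> (\<forall>j<n. f j = xs ! j)"
  by (auto simp: list_eq_iff_nth_eq)

lemma Tn_le: "Tn C n \<omega> \<le> n"
  unfolding Tn_def Let_def by auto

lemma Tn_less_imp_hit:
  assumes "Tn C n \<omega> < n"
  shows "1 \<le> Tn C n \<omega> \<and> (Scnt C (Tn C n \<omega> + 1) \<omega> = nat \<lceil>real n / 2\<rceil> + 1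
                         \<or> Rcnt C (Tn C n \<omega> + 1) \<omega> = nat \<lceil>real n / 2\<rceil> + 1)"
proof -
  define P where "P k \<longleftrightarrow> 1 \<le> k \<and> (Scnt C (k + 1) \<omega> = nat \<lceil>real n / 2\<rceil> + 1
                                   \<or> Rcnt C (k + 1) \<omega> = nat \<lceil>real n / 2\<rceil> + 1)" for k
  have "Tn C n \<omega> = (if \<exists>k. P k then min n (LEAST k. P k) else n)"
    unfolding Tn_def Let_def P_def ..
  with assms have "\<exists>k. P k" "Tn C n \<omega> = (LEAST k. P k)"
    by (auto split: if_splits simp: min_def)
  then show ?thesis using LeastI_ex[of P] unfolding P_def by simp
qed

lemma Tn_early_imp_unbalanced:
  assumes "Tn C n \<omega> + d \<le> n" "1 \<le> d"
  defines "h \<equiv> nat \<lceil>real n / 2\<rceil>"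
  shows "h + d \<le> n \<and> (h < Rcnt C (n - d + 1) \<omega> \<or> h < Scnt C (n - d + 1) \<omega>)"
proof -
  have T: "Tn C n \<omega> + 1 \<le> n - d + 1" using assms(1) by auto
  from Tn_less_imp_hit[of C n \<omega>] assms
  consider "Rcnt C (Tn C n \<omega> + 1) \<omega> = h + 1" | "Scnt C (Tn C n \<omega> + 1) \<omega> = h + 1"
    by fastforce
  then show ?thesis
  proof cases
    case 1
    then show ?thesis
      using Rcnt_mono[OF T, of C \<omega>] Rcnt_le[of C "Tn C n \<omega> + 1" \<omega>] assms(1) by linarith
  next
    case 2
    then show ?thesis
      using Scnt_mono[OF T, of C \<omega>] Rcnt_add_Scnt[of C "Tn C n \<omega> + 1" \<omega>] assms(1) by linarith
  qed
qed

locale greedy_reading = prob_space M for M :: "'a measure" +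
  fixes F0 :: "'a measure" and r s :: "nat \<Rightarrow> real" and LR LS :: "nat \<Rightarrow> 'a \<Rightarrow> nat"
    and C :: "nat \<Rightarrow> 'a \<Rightarrow> bool"
  assumes r_nonneg: "\<forall>i\<ge>1. r i \<ge> 0" and r_sum: "(\<lambda>i. r (Suc i)) sums 1"
    and s_nonneg: "\<forall>i\<ge>1. s i \<ge> 0" and s_sum: "(\<lambda>i. s (Suc i)) sums 1"
    and mu_pos: "(\<Sum>i. r (Suc i) * s (Suc i)) > 0"
    and indep: "indep_sets
        (\<lambda>x. case x of Rand \<Rightarrow> sets F0
                 | LabR n \<Rightarrow> {LR n -` A \<inter> space M | A. True}
                 | LabS n \<Rightarrow> {LS n -` A \<inter> space M | A. True})
        ({Rand} \<union> {LabR n | n. n \<ge> 1} \<union> {LabS n | n. n \<ge> 1})"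
    and distR: "\<forall>n\<ge>1. \<forall>i\<ge>1. measure M {\<omega>\<in>space M. LR n \<omega> = i} = r i"
    and distS: "\<forall>n\<ge>1. \<forall>i\<ge>1. measure M {\<omega>\<in>space M. LS n \<omega> = i} = s i"
    and policy: "reading_policy M F0 C LR LS"
    and greedy: "greedy M r s C LR LS"
begin

definition mu :: real where "mu = (\<Sum>i. r (Suc i) * s (Suc i))"

definition gamma :: real where "gamma = max (SUP i\<in>{1..}. r i) (SUP i\<in>{1..}. s i)"

abbreviation GamR :: "nat \<Rightarrow> 'a \<Rightarrow> real" where "GamR \<equiv> Gam (\<lambda>j \<omega>. s (LR j \<omega>))"

abbreviation GamS :: "nat \<Rightarrow> 'a \<Rightarrow> real" where "GamS \<equiv> Gam (\<lambda>j \<omega>. r (LS j \<omega>))"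

lemma r_le_gamma: "i \<ge> 1 \<Longrightarrow> r i \<le> gamma"
  and s_le_gamma: "i \<ge> 1 \<Longrightarrow> s i \<le> gamma"
proof -
  have "bdd_above (r ` {1..})" "bdd_above (s ` {1..})"
    using term_le_1_if_nonneg_sums_1[OF r_sum r_nonneg] term_le_1_if_nonneg_sums_1[OF s_sum s_nonneg]
    by (auto intro!: bdd_aboveI[of _ 1])
  then show "i \<ge> 1 \<Longrightarrow> r i \<le> gamma" "i \<ge> 1 \<Longrightarrow> s i \<le> gamma"
    unfolding gamma_def by (meson atLeast_iff cSUP_upper max.coboundedI1 max.coboundedI2)+
qed

lemma mu_le_gamma: "mu \<le> gamma"
proof -
  have "summable (\<lambda>i. r (Suc i) * s (Suc i))"
  proof (rule summable_comparison_test)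
    show "\<exists>N. \<forall>n\<ge>N. norm (r (Suc n) * s (Suc n)) \<le> s (Suc n)"
      using r_nonneg s_nonneg term_le_1_if_nonneg_sums_1[OF r_sum r_nonneg]
      by (intro exI[of _ 0]) (auto simp: abs_mult intro!: mult_left_le_one_le)
    show "summable (\<lambda>n. s (Suc n))" using s_sum by (simp add: sums_iff)
  qed
  moreover have "summable (\<lambda>i. gamma * s (Suc i))"
    using s_sum by (intro summable_mult) (simp add: sums_iff)
  moreover have "r (Suc i) * s (Suc i) \<le> gamma * s (Suc i)" for i
    using r_le_gamma s_nonneg by (intro mult_right_mono) auto
  ultimately have "mu \<le> (\<Sum>i. gamma * s (Suc i))"
    unfolding mu_def by (intro suminf_le)
  also have "\<dots> = gamma" using s_sum by (simp add: suminf_mult sums_iff)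
  finally show ?thesis .
qed

lemma mu_gt_0: "0 < mu" using mu_pos by (simp add: mu_def)

lemma gamma_gt_0: "0 < gamma" using mu_gt_0 mu_le_gamma by linarith

lemma label_events:
  assumes "1 \<le> n"
  shows "LR n -` A \<inter> space M \<in> events" "LS n -` A \<inter> space M \<in> events"
  using conjunct1[OF indep[unfolded indep_sets_def], rule_format, of "LabR n"]
    conjunct1[OF indep[unfolded indep_sets_def], rule_format, of "LabS n"] assms
  by auto

lemma F0_events: "sets F0 \<subseteq> events"
  using conjunct1[OF indep[unfolded indep_sets_def], rule_format, of Rand] by simp

lemma LR_measurable [measurable]: "1 \<le> n \<Longrightarrow> LR n \<in> measurable M (count_space UNIV)"
  and LS_measurable [measurable]: "1 \<le> n \<Longrightarrow> LS n \<in> measurable M (count_space UNIV)"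
  by (auto intro!: measurableI label_events)

lemma GamR_measurable [measurable]: "GamR m \<in> borel_measurable M"
  and GamS_measurable [measurable]: "GamS m \<in> borel_measurable M"
  unfolding Gam_def[abs_def] by measurable

lemma expectation_r_LS: "1 \<le> n \<Longrightarrow> expectation (\<lambda>\<omega>. r (LS n \<omega>)) = mu"
  unfolding mu_def using distS r_nonneg term_le_1_if_nonneg_sums_1[OF r_sum r_nonneg]
  by (intro expectation_comp_eq_suminf[OF LS_measurable s_sum s_nonneg, where B=1]) auto

lemma expectation_s_LR: "1 \<le> n \<Longrightarrow> expectation (\<lambda>\<omega>. s (LR n \<omega>)) = mu"
  unfolding mu_def using distR s_nonneg term_le_1_if_nonneg_sums_1[OF s_sum s_nonneg]
  by (subst expectation_comp_eq_suminf[OF LR_measurable r_sum r_nonneg, where B=1])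
     (auto simp: mult.commute)

(* The values r 0 and s 0 are unconstrained, so the gains s (LR j) and r (LS j) are nonnegative
   and bounded by gamma only almost surely. *)
lemma AE_labels_pos: "AE \<omega> in M. \<forall>j\<ge>1. 0 < LR j \<omega> \<and> 0 < LS j \<omega>"
proof -
  have "AE \<omega> in M. 1 \<le> j \<longrightarrow> 0 < LR j \<omega> \<and> 0 < LS j \<omega>" for j
  proof (cases "1 \<le> j")
    case True
    with AE_neq_0_if_masses_sum_1[OF LR_measurable r_sum] AE_neq_0_if_masses_sum_1[OF LS_measurable s_sum]
    show ?thesis using distR distS by (auto elim!: eventually_mp intro!: eventually_mono)
  qed simp
  then show ?thesis by (simp add: AE_all_countable)
qed

lemma AE_gains_nonneg: "AE \<omega> in M. (\<forall>j\<ge>1. 0 \<le> s (LR j \<omega>)) \<and> (\<forall>j\<ge>1. 0 \<le> r (LS j \<omega>))"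
  using AE_labels_pos by eventually_elim (simp add: r_nonneg s_nonneg Suc_leI)

definition gain :: "src \<Rightarrow> 'a \<Rightarrow> real" where
  "gain x \<omega> = (case x of Rand \<Rightarrow> 0 | LabR n \<Rightarrow> s (LR n \<omega>) | LabS n \<Rightarrow> r (LS n \<omega>))"

definition labels :: "src set" where "labels = {LabR n | n. n \<ge> 1} \<union> {LabS n | n. n \<ge> 1}"

lemma indep_gains: "indep_vars (\<lambda>_. borel) gain labels"
  unfolding indep_vars_def2
proof
  show "\<forall>i\<in>labels. random_variable borel (gain i)"
    by (auto simp: labels_def gain_def[abs_def])
  have indep_labels: "indep_sets (\<lambda>x. case x of Rand \<Rightarrow> sets F0
                 | LabR n \<Rightarrow> {LR n -` A \<inter> space M | A. True}
                 | LabS n \<Rightarrow> {LS n -` A \<inter> space M | A. True}) labels"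
    by (rule indep_sets_mono_index[OF _ indep]) (auto simp: labels_def)
  have gain_vimage: "gain (LabR n) -` A = LR n -` (s -` A)" "gain (LabS n) -` A = LS n -` (r -` A)"
    for n A by (auto simp: gain_def)
  show "indep_sets (\<lambda>i. {gain i -` A \<inter> space M |A. A \<in> sets borel}) labels"
    by (rule indep_sets_mono_sets[OF indep_labels]) (auto simp: labels_def gain_vimage; blast)
qed

lemma GamR_eq_sum_gain: "GamR m \<omega> = (\<Sum>i\<in>LabR ` {1..m}. gain i \<omega>)"
  and GamS_eq_sum_gain: "GamS m \<omega> = (\<Sum>i\<in>LabS ` {1..m}. gain i \<omega>)"
  by (simp_all add: Gam_def sum.reindex inj_on_def gain_def)

lemma prob_gain_sum_le_gain_sum:
  assumes "A \<subseteq> labels" "B \<subseteq> labels" "finite A" "finite B" "A \<inter> B = {}" "card A \<le> card B"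
  shows "prob {\<omega>\<in>space M. (\<Sum>i\<in>B. gain i \<omega>) \<le> (\<Sum>i\<in>A. gain i \<omega>)}
           \<le> exp (-2 * ((real (card B) - real (card A)) * mu)\<^sup>2 / ((real (card A) + real (card B)) * gamma\<^sup>2))"
proof (rule Hoeffding_ineq_sum_le_sum)
  show "indep_vars (\<lambda>_. borel) gain (A \<union> B)"
    using assms(1,2) by (intro indep_vars_subset[OF indep_gains]) auto
  show "AE \<omega> in M. gain i \<omega> \<in> {0..gamma}" if "i \<in> A \<union> B" for i
    by (rule eventually_mono[OF AE_labels_pos])
       (use that assms(1,2) in \<open>auto simp: labels_def gain_def r_nonneg s_nonneg r_le_gamma s_le_gamma Suc_leI\<close>)
  show "expectation (gain i) = mu" if "i \<in> A \<union> B" for i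
    using that assms(1,2)
    by (auto simp: labels_def gain_def[abs_def] expectation_r_LS expectation_s_LR)
qed (use assms mu_gt_0 in auto)

lemma label_blocks:
  "LabR ` {1..m} \<subseteq> labels" "LabS ` {1..m} \<subseteq> labels"
  "LabR ` X \<inter> LabS ` Y = {}" "LabS ` X \<inter> LabR ` Y = {}"
  "card (LabR ` X) = card X" "card (LabS ` X) = card X"
  by (auto simp: labels_def) (simp_all add: card_image inj_on_def)

lemma prob_GamR_le_GamS:
  "a \<le> b \<Longrightarrow> prob {\<omega>\<in>space M. GamR b \<omega> \<le> GamS a \<omega>}
     \<le> exp (-2 * ((real b - real a) * mu)\<^sup>2 / ((real a + real b) * gamma\<^sup>2))"
  using prob_gain_sum_le_gain_sum[OF label_blocks(2,1) _ _ label_blocks(4), of a b]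
  by (simp add: GamR_eq_sum_gain GamS_eq_sum_gain label_blocks(5,6))

lemma prob_GamS_le_GamR:
  "a \<le> b \<Longrightarrow> prob {\<omega>\<in>space M. GamS b \<omega> \<le> GamR a \<omega>}
     \<le> exp (-2 * ((real b - real a) * mu)\<^sup>2 / ((real a + real b) * gamma\<^sup>2))"
  using prob_gain_sum_le_gain_sum[OF label_blocks(1,2) _ _ label_blocks(3), of a b]
  by (simp add: GamR_eq_sum_gain GamS_eq_sum_gain label_blocks(5,6))

lemma Rcnt_measurable_if:
  assumes "\<forall>j\<in>{1..n}. {\<omega>\<in>space M. C j \<omega>} \<in> sets M"
  shows "Rcnt C n \<in> measurable M (count_space UNIV)"
  using assms
proof (induction n)
  case (Suc n)
  then have [measurable]: "Rcnt C n \<in> measurable M (count_space UNIV)" "Measurable.pred M (C (Suc n))"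
    by (auto simp: Measurable.pred_def)
  have "Rcnt C (Suc n) = (\<lambda>\<omega>. Rcnt C n \<omega> + (if C (Suc n) \<omega> then 1 else 0))"
    by (auto simp: Rcnt_Suc)
  then show ?case by simp
next
  case 0
  have "Rcnt C 0 = (\<lambda>_. 0)" by (simp add: fun_eq_iff)
  then show ?case by simp
qed

lemma hist_measurable_if:
  assumes "\<forall>j\<in>{1..n}. {\<omega>\<in>space M. C j \<omega>} \<in> sets M"
  shows "hist C LR LS n -` A \<inter> space M \<in> sets M"
proof -
  have [measurable]: "Rcnt C n \<in> measurable M (count_space UNIV)"
    using assms by (rule Rcnt_measurable_if)
  \<comment> \<open>The codomain of hist is uncountable; hist factors through a map into a countable type.\<close>
  define enc where "enc \<omega> = (Rcnt C n \<omega>, map (\<lambda>j. LR (Suc j) \<omega>) [0..<n], map (\<lambda>j. LS (Suc j) \<omega>) [0..<n])"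
    for \<omega>
  define dec :: "nat \<times> nat list \<times> nat list \<Rightarrow> nat \<times> (nat \<Rightarrow> nat) \<times> (nat \<Rightarrow> nat)" where
    "dec = (\<lambda>(k, xs, ys). (k, \<lambda>j. if 1 \<le> j \<and> j \<le> k then xs ! (j - 1) else 0,
                              \<lambda>j. if 1 \<le> j \<and> j \<le> n - k then ys ! (j - 1) else 0))"
  have "hist C LR LS n \<omega> = dec (enc \<omega>)" for \<omega>
  proof -
    have nth_labels: "map (\<lambda>j. LR (Suc j) \<omega>) [0..<n] ! (j - 1) = LR j \<omega>"
      "map (\<lambda>j. LS (Suc j) \<omega>) [0..<n] ! (j - 1) = LS j \<omega>" if "1 \<le> j" "j \<le> n" for j
      using that by (cases j; simp)+
    then show ?thesis
      using Rcnt_le[of C n \<omega>] by (auto simp: hist_def dec_def enc_def Scnt_def nth_labels fun_eq_iff)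
  qed
  then have "hist C LR LS n -` A \<inter> space M = enc -` (dec -` A) \<inter> space M"
    by auto
  moreover have "enc \<in> measurable M (count_space UNIV)"
  proof (subst measurable_count_space_eq2_countable, safe)
    fix k :: nat and xs ys :: "nat list"
    have "enc -` {(k, xs, ys)} \<inter> space M =
      {\<omega>\<in>space M. Rcnt C n \<omega> = k \<and> length xs = n \<and> (\<forall>j<n. LR (Suc j) \<omega> = xs ! j)
                   \<and> length ys = n \<and> (\<forall>j<n. LS (Suc j) \<omega> = ys ! j)}"
      unfolding enc_def vimage_def singleton_iff prod.inject map_upt_eq_iff by blast
    also have "\<dots> \<in> sets M" by measurable
    finally show "enc -` {(k, xs, ys)} \<inter> space M \<in> sets M" .
  qed auto
  ultimately show ?thesis by (simp add: measurable_sets)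
qed

lemma C_events: "\<forall>j\<in>{1..n}. {\<omega>\<in>space M. C j \<omega>} \<in> sets M"
proof (induction n)
  case (Suc n)
  have "filt M F0 C LR LS n \<subseteq> sets M"
    unfolding filt_def using F0_events hist_measurable_if[OF Suc.IH]
    by (intro sets.sigma_sets_subset) auto
  moreover have "{\<omega>\<in>space M. C (Suc n) \<omega>} \<in> filt M F0 C LR LS n"
    using policy unfolding reading_policy_def by (metis diff_Suc_1 le_add1 plus_1_eq_Suc)
  ultimately show ?case using Suc.IH by (auto simp: le_Suc_eq)
qed simp

lemma Rcnt_measurable [measurable]: "Rcnt C n \<in> measurable M (count_space UNIV)"
  using C_events by (rule Rcnt_measurable_if)

lemma Scnt_measurable [measurable]: "Scnt C n \<in> measurable M (count_space UNIV)"
  unfolding Scnt_def[abs_def] by measurable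

lemma Tn_measurable [measurable]: "Tn C n \<in> measurable M (count_space UNIV)"
  unfolding Tn_def[abs_def] Let_def by measurable

lemma prob_le_if_unbalanced:
  assumes unbalanced: "\<And>\<omega>. \<omega> \<in> E \<Longrightarrow> h < Rcnt C n \<omega> \<or> h < Scnt C n \<omega>"
    and "n = a + h + 1" "1 \<le> h" "a \<le> h" "real (a + h) \<le> N" "0 \<le> d" "d \<le> real h - real a"
  shows "prob E \<le> 2 * exp (-2 * (d * mu)\<^sup>2 / (N * gamma\<^sup>2))"
proof -
  have "prob E \<le> prob ({\<omega>\<in>space M. GamR h \<omega> \<le> GamS a \<omega>} \<union> {\<omega>\<in>space M. GamS h \<omega> \<le> GamR a \<omega>})"
  proof (rule finite_measure_mono_AE)
    show "AE \<omega> in M. \<omega> \<in> E \<longrightarrow>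
        \<omega> \<in> {\<omega>\<in>space M. GamR h \<omega> \<le> GamS a \<omega>} \<union> {\<omega>\<in>space M. GamS h \<omega> \<le> GamR a \<omega>}"
      using AE_space AE_gains_nonneg
      by eventually_elim (use greedy_unbalanced[OF greedy _ _ _ \<open>1 \<le> h\<close>] unbalanced assms(2) in blast)
  qed measurable
  also have "\<dots> \<le> prob {\<omega>\<in>space M. GamR h \<omega> \<le> GamS a \<omega>} + prob {\<omega>\<in>space M. GamS h \<omega> \<le> GamR a \<omega>}"
    by (rule measure_Un_le) measurable
  also have "\<dots> \<le> 2 * exp (-2 * ((real h - real a) * mu)\<^sup>2 / ((real a + real h) * gamma\<^sup>2))"
    using prob_GamR_le_GamS[OF \<open>a \<le> h\<close>] prob_GamS_le_GamR[OF \<open>a \<le> h\<close>] by simp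
  also have "\<dots> \<le> 2 * exp (-2 * (d * mu)\<^sup>2 / (N * gamma\<^sup>2))"
  proof -
    have "(d * mu)\<^sup>2 \<le> ((real h - real a) * mu)\<^sup>2"
      using assms mu_gt_0 by (intro power_mono mult_right_mono) auto
    moreover have "0 < (real a + real h) * gamma\<^sup>2" "(real a + real h) * gamma\<^sup>2 \<le> N * gamma\<^sup>2"
      using assms gamma_gt_0 by auto
    ultimately have "(d * mu)\<^sup>2 / (N * gamma\<^sup>2) \<le> ((real h - real a) * mu)\<^sup>2 / ((real a + real h) * gamma\<^sup>2)"
      by (intro frac_le) auto
    then show ?thesis by simp
  qed
  finally show ?thesis .
qed

lemma prob_Rcnt_deviation:
  assumes "1 \<le> t"
  shows "prob {\<omega>\<in>space M. \<bar>(real (Rcnt C n \<omega>) - real n / 2) / sqrt (real n)\<bar> > t}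
           \<le> 2 * exp (- ((mu / (2 * gamma))\<^sup>2 * t))"
    (is "prob ?B \<le> _")
proof (cases "n = 0")
  case False
  define x where "x = real n / 2 + t * sqrt (real n)"
  define h where "h = nat \<lfloor>x\<rfloor>"
  have "1 \<le> sqrt (real n)" using False by simp
  then have "1 \<le> t * sqrt (real n)"
    using mult_mono[OF \<open>1 \<le> t\<close> \<open>1 \<le> sqrt (real n)\<close>] \<open>1 \<le> t\<close> by simp
  then have h: "real h \<le> x" "x < real h + 1" "1 \<le> h"
    unfolding h_def x_def by linarith+
  have unbalanced: "h < Rcnt C n \<omega> \<or> h < Scnt C n \<omega>" if "\<omega> \<in> ?B" for \<omega>
  proof -
    have "t * sqrt (real n) < \<bar>real (Rcnt C n \<omega>) - real n / 2\<bar>"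
      using that \<open>1 \<le> sqrt (real n)\<close> by (simp add: abs_divide pos_less_divide_eq)
    moreover have "real (Scnt C n \<omega>) = real n - real (Rcnt C n \<omega>)"
      using Rcnt_add_Scnt[of C n \<omega>] by linarith
    ultimately show ?thesis using h unfolding x_def by linarith
  qed
  show ?thesis
  proof (cases "h < n")
    case True
    define a where "a = n - h - 1"
    have n_eq: "n = a + h + 1" using True by (simp add: a_def)
    then have unbalanced_params: "a \<le> h" "real (a + h) \<le> real n" "t * sqrt (real n) \<le> real h - real a"
      using h \<open>1 \<le> t * sqrt (real n)\<close> unfolding x_def by linarith+
    have "prob ?B \<le> 2 * exp (-2 * (t * sqrt (real n) * mu)\<^sup>2 / (real n * gamma\<^sup>2))"
      using h(3) unbalanced_params \<open>1 \<le> t * sqrt (real n)\<close>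
      by (intro prob_le_if_unbalanced[OF unbalanced n_eq]) auto
    also have "\<dots> \<le> 2 * exp (- ((mu / (2 * gamma))\<^sup>2 * t))"
      using Hoeffding_exponent_le[OF \<open>1 \<le> t\<close>, of "real n" mu gamma] False by simp
    finally show ?thesis .
  next
    case False
    have "\<not> (h < Rcnt C n \<omega> \<or> h < Scnt C n \<omega>)" for \<omega>
      using Rcnt_add_Scnt[of C n \<omega>] False by linarith
    then have "?B = {}" using unbalanced by blast
    then show ?thesis by (subst \<open>?B = {}\<close>) simp
  qed
qed (use \<open>1 \<le> t\<close> in simp)

lemma prob_Tn_early:
  assumes "1 \<le> n"
  shows "prob {\<omega>\<in>space M. Tn C n \<omega> + d \<le> n} \<le> 2 * exp (-2 * (real d * mu)\<^sup>2 / (real n * gamma\<^sup>2))"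
    (is "prob ?B \<le> _")
proof (cases "d = 0")
  case False
  define h where "h = nat \<lceil>real n / 2\<rceil>"
  have h: "1 \<le> h" "real n \<le> 2 * real h"
    using assms unfolding h_def by linarith+
  have hit: "h + d \<le> n \<and> (h < Rcnt C (n - d + 1) \<omega> \<or> h < Scnt C (n - d + 1) \<omega>)"
    if "\<omega> \<in> ?B" for \<omega>
    using Tn_early_imp_unbalanced[of C n \<omega> d] that False by (simp add: h_def)
  show ?thesis
  proof (cases "h + d \<le> n")
    case True
    define a where "a = n - d - h"
    have "n - d + 1 = a + h + 1" using True by (simp add: a_def)
    with h True hit show ?thesis
      by (intro prob_le_if_unbalanced[where n = "n - d + 1" and a = a]) (auto simp: a_def)
  next
    case False
    then have "?B = {}" using hit by fastforce
    then show ?thesis by (subst \<open>?B = {}\<close>) simp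
  qed
next
  case True
  then show ?thesis by (simp add: order_trans[OF prob_le_1])
qed

lemma prob_Tn_deviation:
  assumes "1 \<le> n" "0 \<le> y"
  shows "prob {\<omega>\<in>space M. y < ((real n - real (Tn C n \<omega>)) / sqrt (real n))\<^sup>2}
           \<le> 2 * exp (- (2 * mu\<^sup>2 / gamma\<^sup>2) * y)"
proof -
  define d where "d = nat \<lceil>sqrt (real n * y)\<rceil>"
  have "sqrt (real n * y) \<le> real d" unfolding d_def by linarith
  then have "(sqrt (real n * y))\<^sup>2 \<le> (real d)\<^sup>2" using assms by (intro power_mono) auto
  then have "real n * y \<le> (real d)\<^sup>2" using assms by simp
  have "{\<omega>\<in>space M. y < ((real n - real (Tn C n \<omega>)) / sqrt (real n))\<^sup>2} \<subseteq> {\<omega>\<in>space M. Tn C n \<omega> + d \<le> n}"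
  proof safe
    fix \<omega> assume "y < ((real n - real (Tn C n \<omega>)) / sqrt (real n))\<^sup>2"
    then have "real n * y < (real n - real (Tn C n \<omega>))\<^sup>2"
      using assms by (simp add: power_divide field_simps)
    then have "sqrt (real n * y) < sqrt ((real n - real (Tn C n \<omega>))\<^sup>2)"
      by (rule real_sqrt_less_mono)
    then have "sqrt (real n * y) < real (n - Tn C n \<omega>)"
      using Tn_le[of C n \<omega>] by simp
    then have "d \<le> n - Tn C n \<omega>" unfolding d_def by (simp add: nat_le_iff ceiling_le_iff)
    then show "Tn C n \<omega> + d \<le> n" using Tn_le[of C n \<omega>] by linarith
  qed
  then have "prob {\<omega>\<in>space M. y < ((real n - real (Tn C n \<omega>)) / sqrt (real n))\<^sup>2}
      \<le> prob {\<omega>\<in>space M. Tn C n \<omega> + d \<le> n}"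
    by (intro finite_measure_mono) measurable
  also have "\<dots> \<le> 2 * exp (-2 * (real d * mu)\<^sup>2 / (real n * gamma\<^sup>2))"
    using assms(1) by (rule prob_Tn_early)
  also have "\<dots> \<le> 2 * exp (- (2 * mu\<^sup>2 / gamma\<^sup>2) * y)"
  proof -
    have "(2 * mu\<^sup>2 / gamma\<^sup>2) * y = 2 * mu\<^sup>2 * (real n * y) / (real n * gamma\<^sup>2)"
      using assms by simp
    also have "\<dots> \<le> 2 * (real d * mu)\<^sup>2 / (real n * gamma\<^sup>2)"
      using mult_left_mono[OF \<open>real n * y \<le> (real d)\<^sup>2\<close>, of "2 * mu\<^sup>2"]
      by (intro divide_right_mono) (simp_all add: power_mult_distrib mult_ac)
    finally show ?thesis by simp
  qed
  finally show ?thesis .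
qed

end

theorem lemma4p3:
  fixes M :: "'a measure" and F0 :: "'a measure"
    and r s :: "nat \<Rightarrow> real"
    and LR LS :: "nat \<Rightarrow> 'a \<Rightarrow> nat"
    and C :: "nat \<Rightarrow> 'a \<Rightarrow> bool"
  assumes P: "prob_space M"
    and r_nonneg: "\<forall>i\<ge>1. r i \<ge> 0" and r_sum: "(\<lambda>i. r (Suc i)) sums 1"
    and s_nonneg: "\<forall>i\<ge>1. s i \<ge> 0" and s_sum: "(\<lambda>i. s (Suc i)) sums 1"
    and mu_pos: "(\<Sum>i. r (Suc i) * s (Suc i)) > 0"
    and F0: "space F0 = space M"
    and indep: "prob_space.indep_sets M
        (\<lambda>x. case x of Rand \<Rightarrow> sets F0
                 | LabR n \<Rightarrow> {LR n -` A \<inter> space M | A. True}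
                 | LabS n \<Rightarrow> {LS n -` A \<inter> space M | A. True})
        ({Rand} \<union> {LabR n | n. n \<ge> 1} \<union> {LabS n | n. n \<ge> 1})"
    and distR: "\<forall>n\<ge>1. \<forall>i\<ge>1. measure M {\<omega>\<in>space M. LR n \<omega> = i} = r i"
    and distS: "\<forall>n\<ge>1. \<forall>i\<ge>1. measure M {\<omega>\<in>space M. LS n \<omega> = i} = s i"
    and policy: "reading_policy M F0 C LR LS"
    and greedy: "greedy M r s C LR LS"
  defines "\<mu> \<equiv> (\<Sum>i. r (Suc i) * s (Suc i))"
    and "\<gamma> \<equiv> max (SUP i\<in>{1..}. r i) (SUP i\<in>{1..}. s i)"
  shows "(\<forall>t\<ge>1. \<forall>n::nat. real n \<ge> (2 + \<gamma> / \<mu>)\<^sup>2 \<longrightarrow>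
            measure M {\<omega>\<in>space M. \<bar>(real (Rcnt C n \<omega>) - real n / 2) / sqrt (real n)\<bar> > t}
              \<le> 2 * exp (- ((\<mu> / (2 * \<gamma>))\<^sup>2 * t)))
       \<and> unif_integrable M {1..}
           (\<lambda>n \<omega>. ((real n - real (Tn C n \<omega>)) / sqrt (real n))\<^sup>2)"
proof -
  interpret greedy_reading M F0 r s LR LS C
    using P r_nonneg r_sum s_nonneg s_sum mu_pos indep distR distS policy greedy
    by (simp add: greedy_reading_def greedy_reading_axioms_def)
  have "\<mu> = mu" "\<gamma> = gamma"
    by (simp_all add: \<mu>_def mu_def \<gamma>_def gamma_def)
  moreover have "unif_integrable M {1..} (\<lambda>n \<omega>. ((real n - real (Tn C n \<omega>)) / sqrt (real n))\<^sup>2)"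
  proof (rule unif_integrable_if_exponential_tail[where c = 2])
    show "0 < 2 * mu\<^sup>2 / gamma\<^sup>2" using mu_gt_0 gamma_gt_0 by simp
    show "prob {\<omega>\<in>space M. y < ((real n - real (Tn C n \<omega>)) / sqrt (real n))\<^sup>2}
        \<le> 2 * exp (- (2 * mu\<^sup>2 / gamma\<^sup>2) * y)" if "n \<in> {1..}" "0 \<le> y" for n y
      using that by (intro prob_Tn_deviation) auto
  qed auto
  ultimately show ?thesis
    using prob_Rcnt_deviation by auto
qed

end
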